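(* Let $\mathcal{C}$ be an uncrossable family of cycles in a graph and $C_1,C_2\in\mathcal{C}$. Let $v,w$ be two vertices, $P_1$ a $v$-$w$-path in $C_1$ and $P_2$ a $v$-$w$-path in $C_2$. Then $P_1+P_2$ or $P_1+(C_2-P_2)$ contains (the edge set of) a cycle in $\mathcal{C}$.
   Context: Graphs may be directed or undirected; cycles are simple, and a $v$-$w$-path in a cycle means a subpath of the cycle with endpoints $v$ and $w$. $P+Q$ is the union (multiset sum) of edge sets and $C-P$ the edge set of $C$ minus that of $P$. A family $\mathcal{C}$ is uncrossable if for all $C_1,C_2\in\mathcal{C}$ and every path $P_2$ in $C_2$ sharing only its endpoints with $C_1$, there is a path $P_1$ in $C_1$ between these endpoints with $P_1+P_2\in\mathcal{C}$ and $(C_1-P_1)+(C_2-P_2)$ containing a cycle of $\mathcal{C}$. *)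

theory Defs
  imports Main "HOL-Library.Multiset"
begin

text \<open>A graph (possibly with parallel edges) is given by an edge type 'e, an edge set E,
  an endpoint map ends (tail, head), and a flag dir (True = directed, False = undirected).
  Cycles and paths are identified with their edge sets; sums of edge sets are multisets.\<close>

definition step :: "bool \<Rightarrow> ('e \<Rightarrow> 'v \<times> 'v) \<Rightarrow> 'v \<Rightarrow> 'e \<Rightarrow> 'v \<Rightarrow> bool" where
  "step dir ends u e w \<longleftrightarrow> ends e = (u, w) \<or> (\<not> dir \<and> ends e = (w, u))"

definition is_walk :: "bool \<Rightarrow> ('e \<Rightarrow> 'v \<times> 'v) \<Rightarrow> 'e set \<Rightarrow> 'v list \<Rightarrow> 'e list \<Rightarrow> bool" where
  "is_walk dir ends E vs es \<longleftrightarrow> length vs = Suc (length es) \<and> set es \<subseteq> E \<and>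
     (\<forall>i < length es. step dir ends (vs ! i) (es ! i) (vs ! Suc i))"

definition is_path :: "bool \<Rightarrow> ('e \<Rightarrow> 'v \<times> 'v) \<Rightarrow> 'e set \<Rightarrow> 'v \<Rightarrow> 'v \<Rightarrow> 'v list \<Rightarrow> 'e list \<Rightarrow> bool" where
  "is_path dir ends E v w vs es \<longleftrightarrow> is_walk dir ends E vs es \<and> distinct vs \<and> hd vs = v \<and> last vs = w"

definition is_cycle :: "bool \<Rightarrow> ('e \<Rightarrow> 'v \<times> 'v) \<Rightarrow> 'e set \<Rightarrow> 'v list \<Rightarrow> 'e list \<Rightarrow> bool" where
  "is_cycle dir ends E vs es \<longleftrightarrow> is_walk dir ends E vs es \<and> es \<noteq> [] \<and> hd vs = last vs \<and>
     distinct (tl vs) \<and> distinct es"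

definition cycle_edges :: "bool \<Rightarrow> ('e \<Rightarrow> 'v \<times> 'v) \<Rightarrow> 'e set \<Rightarrow> 'e set \<Rightarrow> bool" where
  "cycle_edges dir ends E C \<longleftrightarrow> (\<exists>vs es. is_cycle dir ends E vs es \<and> C = set es)"

definition verts :: "('e \<Rightarrow> 'v \<times> 'v) \<Rightarrow> 'e set \<Rightarrow> 'v set" where
  "verts ends F = fst ` ends ` F \<union> snd ` ends ` F"

definition path_in :: "bool \<Rightarrow> ('e \<Rightarrow> 'v \<times> 'v) \<Rightarrow> 'e set \<Rightarrow> 'v \<Rightarrow> 'v \<Rightarrow> 'e set \<Rightarrow> bool" where
  "path_in dir ends C v w P \<longleftrightarrow> (\<exists>vs es. is_path dir ends C v w vs es \<and> P = set es)"

definition uncrossable :: "bool \<Rightarrow> ('e \<Rightarrow> 'v \<times> 'v) \<Rightarrow> 'e set set \<Rightarrow> bool" where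
  "uncrossable dir ends \<C> \<longleftrightarrow>
    (\<forall>C1\<in>\<C>. \<forall>C2\<in>\<C>. \<forall>x y vs es.
       is_path dir ends C2 x y vs es \<and> x \<noteq> y \<and>
       set vs \<inter> verts ends C1 = {x, y} \<and> set es \<inter> C1 = {} \<longrightarrow>
       (\<exists>P1. (path_in dir ends C1 x y P1 \<or> path_in dir ends C1 y x P1) \<and>
             (\<exists>D\<in>\<C>. mset_set D = mset_set P1 + mset_set (set es)) \<and>
             (\<exists>D\<in>\<C>. mset_set D \<subseteq># mset_set (C1 - P1) + mset_set (C2 - set es))))"

end

theory Submission
  imports Defs
begin

text \<open>
  We prove a stronger claim by induction. Let \<open>P\<close> be an \<open>a\<close>-\<open>b\<close>-path in \<open>C\<^sub>1\<close> and let
  \<open>C \<in> \<C>\<close> be partitioned into edge sets \<open>X\<close> and \<open>Y\<close> sharing no vertex other than \<open>a\<close>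
  and \<open>b\<close>; then a cycle of \<open>\<C>\<close> lies in \<open>P \<union> X\<close> or in \<open>P \<union> Y\<close>. The theorem is the case
  \<open>X = P\<^sub>2\<close>, \<open>Y = C\<^sub>2 - P\<^sub>2\<close>.

  The induction is on the length of \<open>P\<close>, then on the number of edges of \<open>C\<close> outside \<open>P\<close>.
  Along an arc of \<open>C\<close> the edges can pass from \<open>X\<close> to \<open>Y\<close> only at \<open>a\<close> or \<open>b\<close>; hence if
  \<open>P\<close> runs inside \<open>C\<close>, the complementary arc lies on one side and \<open>C\<close> itself is the cycle.
  Otherwise \<open>P\<close> has an ear \<open>Q\<close>, a subpath meeting \<open>C\<close> exactly in its ends \<open>x\<close>, \<open>y\<close>.
  Uncrossability gives an \<open>x\<close>-\<open>y\<close>-arc \<open>A\<close> of \<open>C\<close> with \<open>A + Q \<in> \<C>\<close>; the arc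
  complementary to \<open>A\<close> cannot lie in the path \<open>P\<close>, so \<open>A \<union> Q\<close> has fewer edges outside
  \<open>P\<close> than \<open>C\<close>. Intersecting with \<open>X\<close> and \<open>Y\<close> splits \<open>A \<union> Q\<close> either again at \<open>a\<close>
  and \<open>b\<close> (inner induction), or at one of \<open>a\<close>, \<open>b\<close> and an end of \<open>Q\<close> lying strictly
  inside \<open>P\<close> (outer induction, for the shorter subpath of \<open>P\<close> between them).
\<close>


section \<open>Undirected walks and paths\<close>

definition ustep :: "('e \<Rightarrow> 'v \<times> 'v) \<Rightarrow> 'v \<Rightarrow> 'e \<Rightarrow> 'v \<Rightarrow> bool" where
  "ustep ends u e w \<longleftrightarrow> ends e = (u, w) \<or> ends e = (w, u)"

definition uwalk :: "('e \<Rightarrow> 'v \<times> 'v) \<Rightarrow> 'v list \<Rightarrow> 'e list \<Rightarrow> bool" where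
  "uwalk ends vs es \<longleftrightarrow> length vs = Suc (length es) \<and>
     (\<forall>i < length es. ustep ends (vs ! i) (es ! i) (vs ! Suc i))"

lemma uwalkD:
  "uwalk ends vs es \<Longrightarrow> length vs = Suc (length es)"
  "uwalk ends vs es \<Longrightarrow> i < length es \<Longrightarrow> ustep ends (vs ! i) (es ! i) (vs ! Suc i)"
  by (simp_all add: uwalk_def)

lemma ustep_sym: "ustep ends u e w \<Longrightarrow> ustep ends w e u"
  by (auto simp: ustep_def)

lemma step_imp_ustep: "step dir ends u e w \<Longrightarrow> ustep ends u e w"
  by (auto simp: step_def ustep_def)

lemma ustep_same_edge:
  "ustep ends u e w \<Longrightarrow> ustep ends u' e w' \<Longrightarrow> (u' = u \<and> w' = w) \<or> (u' = w \<and> w' = u)"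
  by (auto simp: ustep_def)

lemma ustep_in_verts: "ustep ends u e w \<Longrightarrow> e \<in> F \<Longrightarrow> u \<in> verts ends F \<and> w \<in> verts ends F"
  unfolding ustep_def verts_def by (auto intro: rev_image_eqI)

lemma verts_iff: "x \<in> verts ends F \<longleftrightarrow> (\<exists>e\<in>F. x = fst (ends e) \<or> x = snd (ends e))"
  unfolding verts_def by force

lemma verts_Un: "verts ends (A \<union> B) = verts ends A \<union> verts ends B"
  unfolding verts_def by auto

lemma verts_mono: "A \<subseteq> B \<Longrightarrow> verts ends A \<subseteq> verts ends B"
  unfolding verts_def by auto

lemma is_pathD:
  assumes "is_path dir ends C a b vs es"
  shows "uwalk ends vs es" "distinct vs" "set es \<subseteq> C" "length vs = Suc (length es)"
    "vs ! 0 = a" "vs ! length es = b"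
proof -
  have w: "is_walk dir ends C vs es" and "distinct vs" "hd vs = a" "last vs = b"
    using assms by (auto simp: is_path_def)
  then show "uwalk ends vs es" "distinct vs" "set es \<subseteq> C" "length vs = Suc (length es)"
    by (auto simp: is_walk_def uwalk_def step_imp_ustep)
  then have "vs \<noteq> []" by auto
  with \<open>hd vs = a\<close> \<open>last vs = b\<close> \<open>length vs = Suc (length es)\<close>
  show "vs ! 0 = a" "vs ! length es = b"
    by (simp_all add: hd_conv_nth last_conv_nth)
qed

lemma is_path_take_drop:
  assumes P: "is_path dir ends C a b vs es" and ij: "i \<le> j" "j \<le> length es"
  shows "is_path dir ends C (vs ! i) (vs ! j) (take (j - i + 1) (drop i vs)) (take (j - i) (drop i es))"
proof -
  have w: "is_walk dir ends C vs es" and "distinct vs" using P by (auto simp: is_path_def)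
  then have "is_walk dir ends C (take (j - i + 1) (drop i vs)) (take (j - i) (drop i es))"
    using ij set_take_subset set_drop_subset by (fastforce simp: is_walk_def)
  moreover have "take (j - i + 1) (drop i vs) \<noteq> []" using w ij by (auto simp: is_walk_def)
  ultimately show ?thesis using ij w \<open>distinct vs\<close>
    by (auto simp: is_path_def is_walk_def hd_conv_nth last_conv_nth)
qed

lemma set_take_drop_eq_image:
  "j \<le> length xs \<Longrightarrow> set (take (j - i) (drop i xs)) = (!) xs ` {i..<j}"
proof -
  assume j: "j \<le> length xs"
  have "set (take (j - i) (drop i xs)) = (!) (drop i xs) ` {0..<j - i}"
    using j by (subst nth_image) auto
  also have "\<dots> = (!) xs ` {i..<j}"
  proof (intro equalityI subsetI)
    fix x assume "x \<in> (!) xs ` {i..<j}"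
    then obtain m where "i \<le> m" "m < j" "x = xs ! m" by auto
    then show "x \<in> (!) (drop i xs) ` {0..<j - i}"
      using j by (intro image_eqI[of _ _ "m - i"]) auto
  qed (use j in auto)
  finally show ?thesis .
qed

lemma is_path_obtain_segment:
  assumes P: "is_path dir ends C a b vs es" and ij: "i \<le> j" "j \<le> length es"
  obtains vs' es' where "is_path dir ends C (vs ! i) (vs ! j) vs' es'"
    "set vs' = (!) vs ` {i..j}" "set es' = (!) es ` {i..<j}"
proof (rule that)
  show "is_path dir ends C (vs ! i) (vs ! j) (take (j - i + 1) (drop i vs)) (take (j - i) (drop i es))"
    by (rule is_path_take_drop[OF P ij])
  show "set (take (j - i) (drop i es)) = (!) es ` {i..<j}" by (rule set_take_drop_eq_image[OF ij(2)])
  have "set (take (Suc j - i) (drop i vs)) = (!) vs ` {i..<Suc j}"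
    using set_take_drop_eq_image[of "Suc j" vs i] ij is_pathD(4)[OF P] by simp
  then show "set (take (j - i + 1) (drop i vs)) = (!) vs ` {i..j}"
    using ij by (simp add: Suc_diff_le atLeastLessThanSuc_atLeastAtMost)
qed

lemma verts_uwalk_segment:
  assumes W: "uwalk ends vs es" and j: "j \<le> length es"
  shows "verts ends ((!) es ` {i..<j}) \<subseteq> (!) vs ` {i..j}"
proof
  fix x assume "x \<in> verts ends ((!) es ` {i..<j})"
  then obtain m where m: "i \<le> m" "m < j" "x = fst (ends (es ! m)) \<or> x = snd (ends (es ! m))"
    by (auto simp: verts_iff)
  then have "x = vs ! m \<or> x = vs ! Suc m" using uwalkD(2)[OF W, of m] j by (auto simp: ustep_def)
  then show "x \<in> (!) vs ` {i..j}" using m(1,2) by auto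
qed

lemma distinct_nth_in_image_iff:
  "distinct xs \<Longrightarrow> l < length xs \<Longrightarrow> I \<subseteq> {..<length xs} \<Longrightarrow> xs ! l \<in> (!) xs ` I \<longleftrightarrow> l \<in> I"
  by (auto simp: nth_eq_iff_index_eq subset_iff)

lemma uwalk_prefix_closed:
  assumes W: "uwalk ends vs es" and D: "distinct vs" and ij: "i < j" "j \<le> length es"
    and m: "m < length es" "\<not> (i \<le> m \<and> m < j)" and st: "ustep ends u (es ! m) w"
  shows "u \<in> (!) vs ` {..i} \<longleftrightarrow> w \<in> (!) vs ` {..i}"
proof -
  have lv: "length vs = Suc (length es)" using uwalkD(1)[OF W] .
  have "{..i} \<subseteq> {..<length vs}" using ij lv by auto
  then have prefix: "vs ! l \<in> (!) vs ` {..i} \<longleftrightarrow> l \<le> i" if "l \<le> length es" for l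
    using distinct_nth_in_image_iff[OF D, of l "{..i}"] that lv by simp
  have "{u, w} = {vs ! m, vs ! Suc m}"
    using ustep_same_edge[OF uwalkD(2)[OF W m(1)] st] by auto
  then show ?thesis using prefix[of m] prefix[of "Suc m"] m ij by (auto simp: doubleton_eq_iff)
qed

lemma path_obtain_ear:
  assumes P: "is_path dir ends C' a b pvs pes" and a: "a \<in> verts ends C" and b: "b \<in> verts ends C"
    and out: "\<not> set pes \<subseteq> C"
  obtains i j where "i < j" "j \<le> length pes" "(!) pvs ` {i..j} \<inter> verts ends C = {pvs ! i, pvs ! j}"
    "(!) pes ` {i..<j} \<inter> C = {}"
proof -
  define L where "L = length pes"
  have W: "uwalk ends pvs pes" and p0: "pvs ! 0 = a" and pL: "pvs ! L = b"
    using is_pathD[OF P] by (auto simp: L_def)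
  obtain m0 where m0: "m0 < L" "pes ! m0 \<notin> C" using out by (metis L_def in_set_conv_nth subsetI)
  define i where "i = (GREATEST m. m \<le> m0 \<and> pvs ! m \<in> verts ends C)"
  define j where "j = (LEAST m. m0 < m \<and> m \<le> L \<and> pvs ! m \<in> verts ends C)"
  have i: "i \<le> m0" "pvs ! i \<in> verts ends C"
    using GreatestI_nat[of "\<lambda>m. m \<le> m0 \<and> pvs ! m \<in> verts ends C" 0 m0] p0 a
    by (simp_all add: i_def)
  have j: "m0 < j" "j \<le> L" "pvs ! j \<in> verts ends C"
    using LeastI[of "\<lambda>m. m0 < m \<and> m \<le> L \<and> pvs ! m \<in> verts ends C" L] pL b m0
    by (simp_all add: j_def)
  have inner: "pvs ! m \<notin> verts ends C" if "i < m" "m < j" for m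
  proof
    assume "pvs ! m \<in> verts ends C"
    then show False
      using Greatest_le_nat[of "\<lambda>m. m \<le> m0 \<and> pvs ! m \<in> verts ends C" m m0]
        Least_le[of "\<lambda>m. m0 < m \<and> m \<le> L \<and> pvs ! m \<in> verts ends C" m] that j
      by (cases "m \<le> m0") (auto simp: i_def j_def)
  qed
  have off: "pes ! m \<notin> C" if m: "i \<le> m" "m < j" for m
  proof (cases "m = m0")
    case False
    then have "i < m \<or> (i < Suc m \<and> Suc m < j)" using m i j by linarith
    then have "pvs ! m \<notin> verts ends C \<or> pvs ! Suc m \<notin> verts ends C" using inner m by blast
    then show ?thesis using ustep_in_verts[OF uwalkD(2)[OF W, of m]] m j by (auto simp: L_def)
  qed (use m0 in simp)
  have "(!) pes ` {i..<j} \<inter> C = {}" using off by auto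
  moreover have "(!) pvs ` {i..j} \<inter> verts ends C = {pvs ! i, pvs ! j}"
    using inner i j by (force simp: le_less)
  ultimately show thesis using that[of i j] i(1) j(1,2) by (simp add: L_def)
qed

lemma path_obtain_subpath_to_end:
  assumes P: "is_path dir ends C a b pvs pes" and x: "x \<in> set pvs" "x \<notin> {a, b}" and c: "c \<in> {a, b}"
  obtains a' b' pvs' pes' where "is_path dir ends C a' b' pvs' pes'" "{a', b'} = {x, c}"
    "set pes' \<subseteq> set pes" "length pes' < length pes"
proof -
  obtain l where l: "l < length pvs" "x = pvs ! l" using x(1) by (metis in_set_conv_nth)
  then have "l \<noteq> 0" "l \<noteq> length pes" using x(2) is_pathD(5,6)[OF P] by (metis insertCI)+
  then have l_bounds: "0 < l" "l < length pes" using l(1) is_pathD(4)[OF P] by auto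
  show thesis
  proof (cases "c = a")
    case True
    have "is_path dir ends C (pvs ! 0) (pvs ! l) (take (l + 1) pvs) (take l pes)"
      using is_path_take_drop[OF P, of 0 l] l_bounds by simp
    moreover have "{pvs ! 0, pvs ! l} = {x, c}" using True l(2) is_pathD(5)[OF P] by auto
    ultimately show thesis by (rule that) (use l_bounds in \<open>simp_all add: set_take_subset\<close>)
  next
    case False
    have "is_path dir ends C (pvs ! l) (pvs ! length pes) (drop l pvs) (drop l pes)"
      using is_path_take_drop[OF P, of l "length pes"] l_bounds is_pathD(4)[OF P] by simp
    moreover have "{pvs ! l, pvs ! length pes} = {x, c}" using False c l(2) is_pathD(6)[OF P] by auto
    ultimately show thesis by (rule that) (use l_bounds in \<open>simp_all add: set_drop_subset\<close>)
  qed
qed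

section \<open>Cycles parametrised by the integers\<close>

definition arc :: "(int \<Rightarrow> 'e) \<Rightarrow> int \<Rightarrow> nat \<Rightarrow> 'e set" where
  "arc Ed q k = (\<lambda>m. Ed (q + int m)) ` {..<k}"

lemma arc_0 [simp]: "arc Ed q 0 = {}"
  by (simp add: arc_def)

lemma arc_Suc: "arc Ed q (Suc k) = insert (Ed (q + int k)) (arc Ed q k)"
  by (simp add: arc_def lessThan_Suc)

lemma arc_add: "arc Ed q (s + t) = arc Ed q s \<union> arc Ed (q + int s) t"
  by (induction t) (auto simp: arc_Suc add.assoc)

lemma arc_mono: "s \<le> k \<Longrightarrow> arc Ed q s \<subseteq> arc Ed q k"
  by (auto simp: arc_def)

lemma arc_first: "0 < k \<Longrightarrow> Ed q \<in> arc Ed q k"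
  by (auto simp: arc_def intro: image_eqI[of _ _ 0])

lemma arc_last: "0 < k \<Longrightarrow> Ed (q + int (k - 1)) \<in> arc Ed q k"
  unfolding arc_def by (rule imageI) simp

lemma arc_subset_range: "arc Ed q k \<subseteq> range Ed"
  by (auto simp: arc_def)

lemma finite_arc [simp]: "finite (arc Ed q k)"
  by (simp add: arc_def)

lemma arc_reverse: "arc (\<lambda>r. Ed (- r - 1)) p k = arc Ed (- p - int k) k"
proof (intro equalityI subsetI)
  fix x assume "x \<in> arc (\<lambda>r. Ed (- r - 1)) p k"
  then obtain m where m: "m < k" and x: "x = Ed (- (p + int m) - 1)" unfolding arc_def by blast
  have "- (p + int m) - 1 = - p - int k + int (k - 1 - m)" using m by (simp add: of_nat_diff)
  then have "x = Ed (- p - int k + int (k - 1 - m))" using x by metis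
  moreover have "k - 1 - m < k" using m by simp
  ultimately show "x \<in> arc Ed (- p - int k) k" unfolding arc_def by blast
next
  fix x assume "x \<in> arc Ed (- p - int k) k"
  then obtain m where m: "m < k" and x: "x = Ed (- p - int k + int m)" unfolding arc_def by blast
  have "- p - int k + int m = - (p + int (k - 1 - m)) - 1" using m by (simp add: of_nat_diff)
  then have "x = Ed (- (p + int (k - 1 - m)) - 1)" using x by metis
  moreover have "k - 1 - m < k" using m by simp
  ultimately show "x \<in> arc (\<lambda>r. Ed (- r - 1)) p k" unfolding arc_def by blast
qed

lemma mod_eq_window_imp_eq:
  assumes "(q + int a) mod int n = (q + int b) mod int n" "a < n" "b < n"
  shows "a = b"
proof (rule ccontr)
  assume "a \<noteq> b"
  have "int n dvd int a - int b"
    using assms(1) mod_eq_dvd_iff[of "q + int a" "int n" "q + int b"] by simp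
  then have "\<bar>int n\<bar> \<le> \<bar>int a - int b\<bar>" using \<open>a \<noteq> b\<close> by (intro dvd_imp_le_int) simp_all
  then show False using assms(2,3) by linarith
qed

locale cycle_param =
  fixes ends :: "'e \<Rightarrow> 'v \<times> 'v" and n :: nat and V :: "int \<Rightarrow> 'v" and Ed :: "int \<Rightarrow> 'e"
  assumes n_pos: "0 < n"
    and ustep: "ustep ends (V r) (Ed r) (V (r + 1))"
    and V_eq_iff: "V r = V s \<longleftrightarrow> r mod int n = s mod int n"
    and Ed_eq_iff: "Ed r = Ed s \<longleftrightarrow> r mod int n = s mod int n"
begin

lemma V_period: "V (r + int n) = V r"
  by (simp add: V_eq_iff)

lemma V_nat_eq_iff: "a < n \<Longrightarrow> b < n \<Longrightarrow> V (q + int a) = V (q + int b) \<longleftrightarrow> a = b"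
  by (auto simp: V_eq_iff dest: mod_eq_window_imp_eq)

lemma V_nat_eq_base_iff: "a < n \<Longrightarrow> V (q + int a) = V q \<longleftrightarrow> a = 0"
  using V_nat_eq_iff[of a 0 q] n_pos by simp

lemma Ed_nat_eq_iff: "a < n \<Longrightarrow> b < n \<Longrightarrow> Ed (q + int a) = Ed (q + int b) \<longleftrightarrow> a = b"
  by (auto simp: Ed_eq_iff dest: mod_eq_window_imp_eq)

lemma reverse: "cycle_param ends n (\<lambda>r. V (- r)) (\<lambda>r. Ed (- r - 1))"
proof
  fix r s :: int
  show "ustep ends (V (- r)) (Ed (- r - 1)) (V (- (r + 1)))"
    using ustep[of "- r - 1"] by (simp add: ustep_sym)
  have "int n dvd s - r \<longleftrightarrow> int n dvd r - s"
    by (rule dvd_diff_commute)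
  then show "V (- r) = V (- s) \<longleftrightarrow> r mod int n = s mod int n"
    "Ed (- r - 1) = Ed (- s - 1) \<longleftrightarrow> r mod int n = s mod int n"
    by (simp_all add: V_eq_iff Ed_eq_iff mod_eq_dvd_iff)
qed (fact n_pos)

lemma ustep_nat: "ustep ends (V (q + int m)) (Ed (q + int m)) (V (q + int (Suc m)))"
proof -
  have "q + int m + 1 = q + int (Suc m)" by simp
  then show ?thesis using ustep[of "q + int m"] by metis
qed

lemma V_Suc_cancel: "V (r + 1) = V (s + 1) \<Longrightarrow> V r = V s"
  by (simp add: V_eq_iff mod_eq_dvd_iff)

lemma range_reverse: "range (\<lambda>r. Ed (- r - 1)) = range Ed"
proof (intro equalityI subsetI)
  fix x assume "x \<in> range Ed"
  then obtain r where "x = Ed (- (- r - 1) - 1)" by auto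
  then show "x \<in> range (\<lambda>r. Ed (- r - 1))" by (rule range_eqI)
qed auto

lemma range_eq_arc: "range Ed = arc Ed q n"
proof (intro equalityI subsetI)
  fix x assume "x \<in> range Ed"
  then obtain r where r: "x = Ed r" by blast
  define m where "m = nat ((r - q) mod int n)"
  have "m < n" "int m = (r - q) mod int n" using n_pos by (simp_all add: m_def nat_less_iff)
  then have "x = Ed (q + int m)" by (simp add: r Ed_eq_iff mod_simps)
  with \<open>m < n\<close> show "x \<in> arc Ed q n" unfolding arc_def by blast
qed (auto simp: arc_def)

lemma finite_range: "finite (range Ed)"
  by (metis range_eq_arc finite_arc)

lemma arc_disjoint:
  assumes "s + t \<le> n" shows "arc Ed q s \<inter> arc Ed (q + int s) t = {}"
proof -
  have "Ed (q + int a) \<noteq> Ed (q + int s + int b)" if "a < s" "b < t" for a b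
  proof
    assume "Ed (q + int a) = Ed (q + int s + int b)"
    then have "Ed (q + int a) = Ed (q + int (s + b))" by (simp add: add.assoc)
    then have "a = s + b" using that assms Ed_nat_eq_iff[of a "s + b" q] by simp
    then show False using that by simp
  qed
  then show ?thesis unfolding arc_def by blast
qed

lemma range_diff_arc:
  assumes "k \<le> n" shows "range Ed - arc Ed q k = arc Ed (q + int k) (n - k)"
proof -
  have "range Ed = arc Ed q k \<union> arc Ed (q + int k) (n - k)"
    using range_eq_arc[of q] arc_add[of Ed q k "n - k"] assms by simp
  moreover have "arc Ed q k \<inter> arc Ed (q + int k) (n - k) = {}"
    using arc_disjoint[of k "n - k" q] assms by simp
  ultimately show ?thesis by blast
qed

lemma V_shift: "V (q + int s + int m) = V (q + int (s + m))"
  by (simp add: add.assoc)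

lemma verts_arc_subset: "verts ends (arc Ed (q + int s) k) \<subseteq> (\<lambda>m. V (q + int m)) ` {s..s + k}"
proof
  fix x assume "x \<in> verts ends (arc Ed (q + int s) k)"
  then obtain m where m: "m < k"
    "x = fst (ends (Ed (q + int (s + m)))) \<or> x = snd (ends (Ed (q + int (s + m))))"
    by (auto simp: verts_iff arc_def add.assoc)
  then have "x \<in> {V (q + int (s + m)), V (q + int (Suc (s + m)))}"
    using ustep_nat[of q "s + m"] by (auto simp: ustep_def)
  moreover have "V (q + int (s + m)) \<in> (\<lambda>m. V (q + int m)) ` {s..s + k}"
    "V (q + int (Suc (s + m))) \<in> (\<lambda>m. V (q + int m)) ` {s..s + k}"
    using m(1) by (auto intro!: imageI simp del: of_nat_Suc of_nat_add)
  ultimately show "x \<in> (\<lambda>m. V (q + int m)) ` {s..s + k}" by blast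
qed

lemma verts_arc_subset_atMost: "verts ends (arc Ed q k) \<subseteq> (\<lambda>m. V (q + int m)) ` {..k}"
  using verts_arc_subset[of q 0 k] by (simp add: atLeast0AtMost)

lemma uwalk_follows:
  assumes W: "uwalk ends vs es" and D: "distinct vs" and S: "set es \<subseteq> range Ed"
    and start: "vs ! 0 = V p" and first: "es \<noteq> [] \<Longrightarrow> es ! 0 = Ed p" and m: "m \<le> length es"
  shows "vs ! m = V (p + int m) \<and> (m < length es \<longrightarrow> es ! m = Ed (p + int m))"
  using m
proof (induction m)
  case 0
  then show ?case using start first by auto
next
  case (Suc m)
  then have m: "m < length es" and IH: "vs ! m = V (p + int m)" "es ! m = Ed (p + int m)" by auto
  have eq: "p + int (Suc m) = p + int m + 1" by simp
  have lv: "length vs = Suc (length es)" using uwalkD(1)[OF W] .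
  have "ustep ends (V (p + int m)) (Ed (p + int m)) (vs ! Suc m)"
    using uwalkD(2)[OF W m] IH by simp
  from ustep_same_edge[OF ustep[of "p + int m"] this]
  have "vs ! Suc m = V (p + int m + 1) \<or> vs ! Suc m = V (p + int m)" by blast
  moreover have "vs ! Suc m \<noteq> vs ! m" using D m lv by (simp add: nth_eq_iff_index_eq)
  ultimately have next_vertex: "vs ! Suc m = V (p + int m + 1)" using IH(1) by argo
  have "es ! Suc m = Ed (p + int m + 1)" if Sm: "Suc m < length es"
  proof -
    have "es ! Suc m \<in> range Ed" using S Sm by (meson nth_mem subsetD)
    then obtain r where r: "es ! Suc m = Ed r" by blast
    have "ustep ends (vs ! Suc m) (Ed r) (vs ! Suc (Suc m))" using uwalkD(2)[OF W Sm] r by simp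
    from ustep_same_edge[OF ustep[of r] this]
    consider "vs ! Suc m = V r" | "vs ! Suc m = V (r + 1)" "vs ! Suc (Suc m) = V r" by blast
    then have "V r = V (p + int m + 1)"
    proof cases
      case 2
      then have "V r = V (p + int m)" using V_Suc_cancel[of r "p + int m"] next_vertex by simp
      then have "vs ! Suc (Suc m) = vs ! m" using 2(2) IH(1) by simp
      then show ?thesis using D Sm lv by (simp add: nth_eq_iff_index_eq)
    qed (simp add: next_vertex)
    then show ?thesis using r by (simp add: V_eq_iff Ed_eq_iff)
  qed
  with next_vertex show ?case unfolding eq by simp
qed

lemma uwalk_follows_arc:
  assumes W: "uwalk ends vs es" and D: "distinct vs" and S: "set es \<subseteq> range Ed"
    and ne: "es \<noteq> []" and start: "vs ! 0 = V p" and first: "es ! 0 = Ed p"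
  shows "length es < n" "set es = arc Ed p (length es)" "vs ! length es = V (p + int (length es))"
proof -
  note follows = uwalk_follows[OF W D S start first]
  have lv: "length vs = Suc (length es)" using uwalkD(1)[OF W] .
  show "length es < n"
  proof (rule ccontr)
    assume "\<not> length es < n"
    then have "vs ! n = vs ! 0" using follows[of n] start V_period[of p] by simp
    then show False using D lv n_pos \<open>\<not> length es < n\<close> by (simp add: nth_eq_iff_index_eq)
  qed
  have "set es = (!) es ` {..<length es}" by (simp add: lessThan_atLeast0 nth_image)
  also have "\<dots> = arc Ed p (length es)" unfolding arc_def using follows by (intro image_cong) auto
  finally show "set es = arc Ed p (length es)" .
  show "vs ! length es = V (p + int (length es))" using follows by simp
qed

lemma uwalk_is_arc:
  assumes W: "uwalk ends vs es" and D: "distinct vs" and S: "set es \<subseteq> range Ed" and ne: "es \<noteq> []"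
  obtains q k where "0 < k" "k < n" "set es = arc Ed q k" "{vs ! 0, vs ! length es} = {V q, V (q + int k)}"
proof -
  obtain r where r: "es ! 0 = Ed r" using S ne nth_mem by blast
  have "ustep ends (vs ! 0) (Ed r) (vs ! 1)" using uwalkD(2)[OF W, of 0] ne r by simp
  then consider "vs ! 0 = V r" | "vs ! 0 = V (r + 1)"
    using ustep_same_edge[OF ustep[of r]] by blast
  then show thesis
  proof cases
    case 1
    note arc = uwalk_follows_arc[OF W D S ne 1 r]
    show thesis by (rule that[of "length es" r]) (use ne arc 1 in simp_all)
  next
    case 2
    interpret rev: cycle_param ends n "\<lambda>r. V (- r)" "\<lambda>r. Ed (- r - 1)" by (rule reverse)
    have "vs ! 0 = V (- (- r - 1))" "es ! 0 = Ed (- (- r - 1) - 1)"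
      using 2 r by (simp_all add: algebra_simps)
    note arc = rev.uwalk_follows_arc[OF W D S[folded range_reverse] ne this]
    show thesis
    proof (rule that[of "length es" "r + 1 - int (length es)"])
      show "0 < length es" "length es < n" using ne arc(1) by simp_all
      show "set es = arc Ed (r + 1 - int (length es)) (length es)"
        using arc(2) by (simp add: arc_reverse algebra_simps)
      have "vs ! length es = V (r + 1 - int (length es))" using arc(3) by (simp add: algebra_simps)
      then show "{vs ! 0, vs ! length es} =
          {V (r + 1 - int (length es)), V (r + 1 - int (length es) + int (length es))}"
        using 2 by (simp add: doubleton_eq_iff)
    qed
  qed
qed

lemma path_obtain_arc:
  assumes P: "is_path dir ends F x y vs es" and S: "set es \<subseteq> range Ed" and xy: "x \<noteq> y"
  obtains q k where "0 < k" "k < n" "set es = arc Ed q k" "{x, y} = {V q, V (q + int k)}"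
proof -
  have "es \<noteq> []" using xy is_pathD(5,6)[OF P] by auto
  then obtain q k
    where "0 < k" "k < n" "set es = arc Ed q k" "{vs ! 0, vs ! length es} = {V q, V (q + int k)}"
    by (rule uwalk_is_arc[OF is_pathD(1,2)[OF P] S])
  then show thesis using that is_pathD(5,6)[OF P] by simp
qed

lemma arc_one_side:
  assumes sides: "arc Ed q k \<subseteq> X \<union> Y" "X \<inter> Y = {}" "verts ends X \<inter> verts ends Y \<subseteq> S"
    and inner: "\<And>m. 0 < m \<Longrightarrow> m < k \<Longrightarrow> V (q + int m) \<notin> S"
  shows "arc Ed q k \<subseteq> X \<or> arc Ed q k \<subseteq> Y"
  using sides(1) inner
proof (induction k)
  case (Suc k)
  then have IH: "arc Ed q k \<subseteq> X \<or> arc Ed q k \<subseteq> Y" and new: "Ed (q + int k) \<in> X \<union> Y"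
    by (auto simp: arc_Suc)
  show ?case
  proof (cases k)
    case (Suc k')
    have "V (q + int k) \<in> verts ends {Ed (q + int k')}" "V (q + int k) \<in> verts ends {Ed (q + int k)}"
      using ustep_in_verts[OF ustep_nat[of q k']] ustep_in_verts[OF ustep_nat[of q k]] Suc by auto
    moreover have "V (q + int k) \<notin> S" using Suc.prems(2)[of k] Suc by simp
    moreover have "Ed (q + int k') \<in> arc Ed q k" using Suc by (auto simp: arc_def)
    ultimately have "\<not> (Ed (q + int k') \<in> X \<and> Ed (q + int k) \<in> Y)"
      "\<not> (Ed (q + int k') \<in> Y \<and> Ed (q + int k) \<in> X)"
      using sides(3) verts_mono[of "{_}" X ends] verts_mono[of "{_}" Y ends] by blast+
    then show ?thesis using IH new sides(2) \<open>Ed (q + int k') \<in> arc Ed q k\<close> by (auto simp: arc_Suc)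
  qed (use new in \<open>auto simp: arc_Suc\<close>)
qed simp

lemma arc_preserves:
  assumes "arc Ed q k \<subseteq> F" and preserves: "\<And>u e w. e \<in> F \<Longrightarrow> ustep ends u e w \<Longrightarrow> u \<in> A \<longleftrightarrow> w \<in> A"
  shows "V q \<in> A \<longleftrightarrow> V (q + int k) \<in> A"
  using assms(1)
proof (induction k)
  case (Suc k)
  then have "V q \<in> A \<longleftrightarrow> V (q + int k) \<in> A" "Ed (q + int k) \<in> F" by (auto simp: arc_Suc)
  then show ?case using preserves[OF _ ustep_nat[of q k]] by simp
qed simp

lemma arc_in_side:
  assumes "arc Ed q k \<subseteq> X \<union> Y" "X \<inter> Y = {}" "verts ends X \<inter> verts ends Y \<subseteq> S"
    and "\<And>m. 0 < m \<Longrightarrow> m < k \<Longrightarrow> V (q + int m) \<notin> S"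
    and "e \<in> arc Ed q k" "e \<in> Y"
  shows "arc Ed q k \<subseteq> Y"
  using arc_one_side[OF assms(1-4)] assms(2,5,6) by blast

end

lemma closed_list_nth_mod:
  assumes hl: "hd xs = last xs" and lv: "length xs = Suc n" and n: "0 < n"
  shows "xs ! nat (r mod int n) = tl xs ! nat ((r - 1) mod int n)"
proof (cases "r mod int n = 0")
  case True
  have "(r - 1) mod int n = (r mod int n - 1) mod int n" by (simp add: mod_diff_left_eq)
  also have "\<dots> = int n - 1" using True n by (simp add: zmod_minus1)
  finally have "(r - 1) mod int n = int n - 1" .
  moreover have "xs ! 0 = xs ! n" using hl lv by (metis hd_conv_nth last_conv_nth diff_Suc_1 list.size(3) nat.distinct(1))
  ultimately show ?thesis using True lv n by (simp add: nth_tl nat_diff_distrib)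
next
  case False
  have "0 \<le> r mod int n - 1" "r mod int n - 1 < int n"
    using False n pos_mod_sign[of "int n" r] pos_mod_bound[of "int n" r] by linarith+
  have "(r - 1) mod int n = (r mod int n - 1) mod int n" by (simp add: mod_diff_left_eq)
  also have "\<dots> = r mod int n - 1" using \<open>0 \<le> r mod int n - 1\<close> \<open>r mod int n - 1 < int n\<close>
    by (rule mod_pos_pos_trivial)
  finally have "(r - 1) mod int n = r mod int n - 1" .
  moreover have "Suc (nat (r mod int n - 1)) = nat (r mod int n)"
    using \<open>0 \<le> r mod int n - 1\<close> by (simp add: Suc_nat_eq_nat_zadd1)
  moreover have "nat (r mod int n) < Suc n" using n pos_mod_bound[of "int n" r] by linarith
  ultimately show ?thesis using lv by (simp add: nth_tl)
qed

lemma is_cycle_param: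
  assumes c: "is_cycle dir ends E cvs ces"
  defines "n \<equiv> length ces"
  shows "cycle_param ends n (\<lambda>r. cvs ! nat (r mod int n)) (\<lambda>r. ces ! nat (r mod int n))"
    and "range (\<lambda>r. ces ! nat (r mod int n)) = set ces"
proof -
  have w: "is_walk dir ends E cvs ces" and "ces \<noteq> []" and hl: "hd cvs = last cvs"
    and dt: "distinct (tl cvs)" and de: "distinct ces" using c by (auto simp: is_cycle_def)
  have lv: "length cvs = Suc n" using w by (simp add: is_walk_def n_def)
  have n: "0 < n" using \<open>ces \<noteq> []\<close> by (simp add: n_def)
  have idx: "nat (r mod int n) < n" "int (nat (r mod int n)) = r mod int n" for r
    using n by (simp_all add: nat_less_iff)
  \<comment> \<open>read through \<open>tl cvs\<close>, which is duplicate-free, the vertices are injective modulo \<open>n\<close>\<close>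
  note wrap = closed_list_nth_mod[OF hl lv n]
  have V_eq: "cvs ! nat (r mod int n) = cvs ! nat (s mod int n) \<longleftrightarrow> r mod int n = s mod int n" for r s
  proof -
    have "cvs ! nat (r mod int n) = cvs ! nat (s mod int n) \<longleftrightarrow> (r - 1) mod int n = (s - 1) mod int n"
      unfolding wrap using nth_eq_iff_index_eq[OF dt] idx lv n by (simp add: eq_nat_nat_iff)
    then show ?thesis by (simp add: mod_eq_dvd_iff)
  qed
  show "cycle_param ends n (\<lambda>r. cvs ! nat (r mod int n)) (\<lambda>r. ces ! nat (r mod int n))"
  proof
    fix r s :: int
    have "step dir ends (cvs ! nat (r mod int n)) (ces ! nat (r mod int n)) (cvs ! Suc (nat (r mod int n)))"
      using w idx(1)[of r] by (simp add: is_walk_def n_def)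
    moreover have "cvs ! Suc (nat (r mod int n)) = cvs ! nat ((r + 1) mod int n)"
      using wrap[of "r + 1"] lv idx(1)[of r] by (simp add: nth_tl)
    ultimately show "ustep ends (cvs ! nat (r mod int n)) (ces ! nat (r mod int n)) (cvs ! nat ((r + 1) mod int n))"
      by (simp add: step_imp_ustep)
    show "cvs ! nat (r mod int n) = cvs ! nat (s mod int n) \<longleftrightarrow> r mod int n = s mod int n" by (rule V_eq)
    show "ces ! nat (r mod int n) = ces ! nat (s mod int n) \<longleftrightarrow> r mod int n = s mod int n"
      using nth_eq_iff_index_eq[OF de] idx n by (simp add: n_def[symmetric] eq_nat_nat_iff)
  qed (fact n)
  show "range (\<lambda>r. ces ! nat (r mod int n)) = set ces"
  proof (intro equalityI subsetI)
    fix x assume "x \<in> set ces"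
    then obtain i where "i < n" "x = ces ! i" by (auto simp: in_set_conv_nth n_def)
    then show "x \<in> range (\<lambda>r. ces ! nat (r mod int n))" by (intro range_eqI[of _ _ "int i"]) simp
  qed (use idx in \<open>auto simp: n_def\<close>)
qed

lemma cycle_edges_obtain_param:
  assumes "cycle_edges dir ends E C"
  obtains n V Ed where "cycle_param ends n V Ed" "C = range Ed"
  using assms is_cycle_param unfolding cycle_edges_def by metis

lemma cycle_edges_finite: "cycle_edges dir ends E C \<Longrightarrow> finite C"
  by (auto simp: cycle_edges_def)

section \<open>Splitting a cycle and recombining it along an ear\<close>

definition splits_at :: "('e \<Rightarrow> 'v \<times> 'v) \<Rightarrow> 'e set \<Rightarrow> 'v \<Rightarrow> 'v \<Rightarrow> 'e set \<Rightarrow> 'e set \<Rightarrow> bool" where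
  "splits_at ends C a b X Y \<longleftrightarrow> C = X \<union> Y \<and> X \<inter> Y = {} \<and> verts ends X \<inter> verts ends Y \<subseteq> {a, b}"

lemma splits_at_cong: "{a, b} = {a', b'} \<Longrightarrow> splits_at ends C a b X Y \<longleftrightarrow> splits_at ends C a' b' X Y"
  unfolding splits_at_def by simp

lemma splits_at_sym: "splits_at ends C a b X Y \<Longrightarrow> splits_at ends C a b Y X"
  unfolding splits_at_def by blast

context cycle_param
begin

lemma split_at_degenerate:
  assumes split: "splits_at ends (range Ed) a b X Y"
    and degenerate: "a = b \<or> a \<notin> verts ends (range Ed) \<or> b \<notin> verts ends (range Ed)"
  shows "range Ed \<subseteq> X \<or> range Ed \<subseteq> Y"
proof -
  have XY: "range Ed = X \<union> Y" "X \<inter> Y = {}" "verts ends X \<inter> verts ends Y \<subseteq> {a, b}"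
    using split by (auto simp: splits_at_def)
  have "verts ends X \<inter> verts ends Y \<subseteq> verts ends (range Ed)" using XY(1) verts_mono[of _ "range Ed" ends] by blast
  moreover obtain u where "{a, b} \<inter> verts ends (range Ed) \<subseteq> {u}" using degenerate by auto
  ultimately have u: "verts ends X \<inter> verts ends Y \<subseteq> {u}" using XY(3) by blast
  obtain q where q: "\<And>m. 0 < m \<Longrightarrow> m < n \<Longrightarrow> V (q + int m) \<noteq> u"
  proof (cases "u \<in> range V")
    case True
    then obtain q where "u = V q" by blast
    then show thesis by (intro that[of q]) (simp add: V_nat_eq_base_iff)
  next
    case False
    then show thesis by (intro that[of 0]) auto
  qed
  show ?thesis
    using arc_one_side[of q n X Y "{u}"] XY(1,2) u q range_eq_arc[of q] by auto
qed

lemma splits_at_arc_complement: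
  assumes "k \<le> n"
  shows "splits_at ends (range Ed) (V q) (V (q + int k)) (arc Ed q k) (arc Ed (q + int k) (n - k))"
  unfolding splits_at_def
proof (intro conjI)
  show "range Ed = arc Ed q k \<union> arc Ed (q + int k) (n - k)"
    using range_eq_arc[of q] arc_add[of Ed q k "n - k"] assms by simp
  show "arc Ed q k \<inter> arc Ed (q + int k) (n - k) = {}"
    using arc_disjoint[of k "n - k" q] assms by simp
  show "verts ends (arc Ed q k) \<inter> verts ends (arc Ed (q + int k) (n - k)) \<subseteq> {V q, V (q + int k)}"
  proof
    fix x assume "x \<in> verts ends (arc Ed q k) \<inter> verts ends (arc Ed (q + int k) (n - k))"
    then have "x \<in> (\<lambda>m. V (q + int m)) ` {..k}" "x \<in> (\<lambda>m. V (q + int m)) ` {k..n}"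
      using verts_arc_subset_atMost[of q k] verts_arc_subset[of q k "n - k"] assms by auto
    then obtain a b where ab: "a \<le> k" "k \<le> b" "b \<le> n" "x = V (q + int a)" "x = V (q + int b)"
      by auto
    show "x \<in> {V q, V (q + int k)}"
    proof (cases "b = n")
      case True
      then show ?thesis using ab V_period[of q] by simp
    next
      case False
      then have "a = b" using ab assms by (simp add: V_nat_eq_iff)
      then show ?thesis using ab by simp
    qed
  qed
qed

lemma path_splits_cycle:
  assumes P: "is_path dir ends F v w vs es" and S: "set es \<subseteq> range Ed"
  shows "splits_at ends (range Ed) v w (set es) (range Ed - set es)"
proof (cases "v = w")
  case True
  then have "es = []" using is_pathD(2,4,5,6)[OF P] by (auto simp: nth_eq_iff_index_eq)
  then show ?thesis by (simp add: splits_at_def verts_def)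
next
  case False
  then obtain q k where "k < n" "set es = arc Ed q k" and vw: "{v, w} = {V q, V (q + int k)}"
    using path_obtain_arc[OF P S] by metis
  then show ?thesis unfolding splits_at_cong[OF vw]
    using splits_at_arc_complement[of k q] range_diff_arc[of k q] by simp
qed

lemma arc_complement_one_side:
  assumes split: "splits_at ends (range Ed) (V q) (V (q + int k)) X Y" and k: "k \<le> n"
  shows "range Ed \<subseteq> arc Ed q k \<union> X \<or> range Ed \<subseteq> arc Ed q k \<union> Y"
proof -
  have "V (q + int k + int m) \<notin> {V q, V (q + int k)}" if "0 < m" "m < n - k" for m
  proof -
    have "k + m < n" "k < n" using that by auto
    then show ?thesis
      using that by (auto simp: V_shift V_nat_eq_iff V_nat_eq_base_iff simp del: of_nat_add)
  qed
  then have "arc Ed (q + int k) (n - k) \<subseteq> X \<or> arc Ed (q + int k) (n - k) \<subseteq> Y"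
    using split range_diff_arc[OF k, of q]
    by (intro arc_one_side[where S="{V q, V (q + int k)}"]) (auto simp: splits_at_def)
  then show ?thesis using range_diff_arc[OF k, of q] by blast
qed

lemma split_without_ear:
  assumes P: "is_path dir ends C' a b pvs pes" and split: "splits_at ends (range Ed) a b X Y"
    and no_ear: "a = b \<or> a \<notin> verts ends (range Ed) \<or> b \<notin> verts ends (range Ed) \<or> set pes \<subseteq> range Ed"
  shows "range Ed \<subseteq> set pes \<union> X \<or> range Ed \<subseteq> set pes \<union> Y"
proof (cases "a = b \<or> a \<notin> verts ends (range Ed) \<or> b \<notin> verts ends (range Ed)")
  case True
  then show ?thesis using split_at_degenerate[OF split] by blast
next
  case False
  with no_ear obtain q k where qk: "k < n" "set pes = arc Ed q k" and ab: "{a, b} = {V q, V (q + int k)}"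
    using path_obtain_arc[OF P] by metis
  have "splits_at ends (range Ed) (V q) (V (q + int k)) X Y"
    using split unfolding splits_at_cong[OF ab] .
  from arc_complement_one_side[OF this less_imp_le[OF qk(1)]] show ?thesis using qk(2) by simp
qed

lemma verts_edge: "x \<in> verts ends {Ed (q + int m)} \<Longrightarrow> x = V (q + int m) \<or> x = V (q + int (Suc m))"
  using ustep_nat[of q m] by (auto simp: verts_iff ustep_def)

text \<open>Besides its start, the arc can pass through at most one more of \<open>a\<close>, \<open>b\<close>; that vertex cuts it
  into two pieces without switching vertices, each containing an edge of \<open>Y\<close>.\<close>

lemma arc_from_switch_in_side:
  assumes k: "0 < k" "k < n"
    and sides: "arc Ed q k \<subseteq> X \<union> Y" "X \<inter> Y = {}" "verts ends X \<inter> verts ends Y \<subseteq> {a, b}"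
    and start: "V q \<in> {a, b}" and first: "Ed q \<in> Y" and last: "Ed (q + int (k - 1)) \<in> Y"
  shows "arc Ed q k \<subseteq> Y"
proof -
  obtain s where s: "0 < s" "s \<le> k"
    and avoid: "\<And>m. 0 < m \<Longrightarrow> m < k \<Longrightarrow> m \<noteq> s \<Longrightarrow> V (q + int m) \<notin> {a, b}"
  proof (cases "\<exists>s. 0 < s \<and> s < k \<and> V (q + int s) \<in> {a, b}")
    case True
    then obtain s where s: "0 < s" "s < k" "V (q + int s) \<in> {a, b}" by blast
    then have "V (q + int s) \<noteq> V q" using k by (simp add: V_nat_eq_base_iff)
    then have ab: "{a, b} = {V q, V (q + int s)}" using start s(3) by auto
    show thesis
    proof (rule that[of s])
      fix m assume "0 < m" "m < k" "m \<noteq> s"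
      then show "V (q + int m) \<notin> {a, b}"
        using s k unfolding ab by (auto simp: V_nat_eq_iff V_nat_eq_base_iff)
    qed (use s in auto)
  next
    case False
    then show thesis using that[of k] k by auto
  qed
  have "arc Ed q s \<subseteq> Y"
  proof (rule arc_in_side[OF _ sides(2,3)])
    show "arc Ed q s \<subseteq> X \<union> Y" using sides(1) arc_mono[of s k Ed q] s by blast
    show "V (q + int m) \<notin> {a, b}" if "0 < m" "m < s" for m using avoid[of m] that s by simp
    show "Ed q \<in> arc Ed q s" using s by (simp add: arc_first)
  qed (fact first)
  moreover have "arc Ed (q + int s) (k - s) \<subseteq> Y"
  proof (cases "s = k")
    case False
    show ?thesis
    proof (rule arc_in_side[OF _ sides(2,3)])
      show "arc Ed (q + int s) (k - s) \<subseteq> X \<union> Y" using sides(1) arc_add[of Ed q s "k - s"] s by simp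
      show "V (q + int s + int m) \<notin> {a, b}" if "0 < m" "m < k - s" for m
        using avoid[of "s + m"] that s by (simp add: V_shift)
      have "q + int s + int (k - s - 1) = q + int (k - 1)" using s False by (simp add: of_nat_diff)
      then show "Ed (q + int (k - 1)) \<in> arc Ed (q + int s) (k - s)"
        using arc_last[of "k - s" Ed "q + int s"] s False by simp
    qed (fact last)
  qed simp
  ultimately show ?thesis using arc_add[of Ed q s "k - s"] s by simp
qed

lemma arc_switches_once:
  assumes k: "0 < k" "k < n"
    and sides: "arc Ed q k \<subseteq> X \<union> Y" "X \<inter> Y = {}" "verts ends X \<inter> verts ends Y \<subseteq> {a, b}"
    and first: "Ed q \<in> X" and last: "Ed (q + int (k - 1)) \<in> Y"
  obtains t where "0 < t" "t < k" "V (q + int t) \<in> {a, b}"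
    "arc Ed q t \<subseteq> X" "arc Ed (q + int t) (k - t) \<subseteq> Y"
proof -
  define t where "t = (LEAST m. Ed (q + int m) \<in> Y)"
  have t: "Ed (q + int t) \<in> Y" "t \<le> k - 1"
    using LeastI[of "\<lambda>m. Ed (q + int m) \<in> Y", OF last] Least_le[of "\<lambda>m. Ed (q + int m) \<in> Y", OF last]
    by (simp_all add: t_def)
  have "t \<noteq> 0" using t(1) first sides(2) by auto
  then have t_bounds: "0 < t" "t < k" using t(2) k(1) by auto
  have before: "Ed (q + int m) \<in> X" if "m < t" for m
  proof -
    have "Ed (q + int m) \<notin> Y" using not_less_Least[OF that[unfolded t_def]] .
    moreover have "Ed (q + int m) \<in> arc Ed q k" using that t_bounds by (auto simp: arc_def)
    ultimately show ?thesis using sides(1) by blast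
  qed
  then have "arc Ed q t \<subseteq> X" by (auto simp: arc_def)
  have "Suc (t - 1) = t" "Ed (q + int (t - 1)) \<in> X" using t_bounds before[of "t - 1"] by simp_all
  then have "V (q + int t) \<in> verts ends X"
    using ustep_in_verts[OF ustep_nat[of q "t - 1"]] by metis
  moreover have "V (q + int t) \<in> verts ends Y" using ustep_in_verts[OF ustep_nat[of q t] t(1)] by blast
  ultimately have switch: "V (q + int t) \<in> {a, b}" using sides(3) by blast
  have "arc Ed (q + int t) (k - t) \<subseteq> Y"
  proof (rule arc_from_switch_in_side[OF _ _ _ sides(2,3) switch t(1)])
    show "0 < k - t" "k - t < n" using t_bounds k by auto
    show "arc Ed (q + int t) (k - t) \<subseteq> X \<union> Y" using sides(1) arc_add[of Ed q t "k - t"] t_bounds by simp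
    have "q + int t + int (k - t - 1) = q + int (k - 1)" using t_bounds by (simp add: of_nat_diff)
    then show "Ed (q + int t + int (k - t - 1)) \<in> Y" using last by metis
  qed
  with t_bounds switch \<open>arc Ed q t \<subseteq> X\<close> show thesis by (rule that)
qed

lemma splits_at_ear_same_side:
  assumes k: "0 < k" "k < n" and split: "splits_at ends (range Ed) a b X Y"
    and Q: "Q \<inter> range Ed = {}" "verts ends Q \<inter> verts ends (range Ed) \<subseteq> {V q, V (q + int k)}"
    and ends_in_Y: "Ed q \<in> Y" "Ed (q + int (k - 1)) \<in> Y"
  shows "splits_at ends (arc Ed q k \<union> Q) a b (arc Ed q k \<inter> X) (arc Ed q k \<inter> Y \<union> Q)"
proof -
  have XY: "range Ed = X \<union> Y" "X \<inter> Y = {}" "verts ends X \<inter> verts ends Y \<subseteq> {a, b}"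
    using split by (auto simp: splits_at_def)
  have inner: "x \<notin> {V q, V (q + int k)}" if x: "x \<in> verts ends (arc Ed q k \<inter> X)" for x
  proof -
    obtain e where e: "e \<in> arc Ed q k \<inter> X" "x \<in> verts ends {e}"
      using x by (auto simp: verts_iff)
    then obtain m where m: "m < k" "e = Ed (q + int m)" by (auto simp: arc_def)
    have not_Y: "Ed (q + int m) \<notin> Y" using e(1) m(2) XY(2) by blast
    then have "m \<noteq> 0" using ends_in_Y(1) by (metis add_0_right of_nat_0)
    moreover have "m \<noteq> k - 1" using not_Y ends_in_Y(2) by auto
    ultimately have "0 < m" "Suc m < k" using m(1) by auto
    moreover have "x = V (q + int m) \<or> x = V (q + int (Suc m))" using verts_edge e(2) m(2) by blast
    ultimately show ?thesis using k(2) by (auto simp: V_nat_eq_iff V_nat_eq_base_iff simp del: of_nat_Suc)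
  qed
  have "verts ends (arc Ed q k \<inter> X) \<subseteq> verts ends (range Ed)"
    using arc_subset_range[of Ed q k] by (intro verts_mono) blast
  then have "verts ends (arc Ed q k \<inter> X) \<inter> verts ends Q = {}" using inner Q(2) by blast
  moreover have "verts ends (arc Ed q k \<inter> X) \<inter> verts ends (arc Ed q k \<inter> Y) \<subseteq> {a, b}"
    using XY(3) verts_mono[of "arc Ed q k \<inter> X" X ends] verts_mono[of "arc Ed q k \<inter> Y" Y ends] by blast
  ultimately have "verts ends (arc Ed q k \<inter> X) \<inter> verts ends (arc Ed q k \<inter> Y \<union> Q) \<subseteq> {a, b}"
    unfolding verts_Un by blast
  moreover have "arc Ed q k \<subseteq> X \<union> Y" using XY(1) arc_subset_range[of Ed q k] by blast
  moreover have "X \<inter> Q = {}" using XY(1) Q(1) by blast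
  ultimately show ?thesis using XY(2) unfolding splits_at_def by blast
qed

lemma splits_at_ear_switch:
  assumes t: "0 < t" "t < k" and k: "k < n"
    and Q: "Q \<inter> range Ed = {}" "verts ends Q \<inter> verts ends (range Ed) \<subseteq> {V q, V (q + int k)}"
  shows "splits_at ends (arc Ed q k \<union> Q) (V q) (V (q + int t))
    (arc Ed q t) (arc Ed (q + int t) (k - t) \<union> Q)"
  unfolding splits_at_def
proof (intro conjI)
  show "arc Ed q k \<union> Q = arc Ed q t \<union> (arc Ed (q + int t) (k - t) \<union> Q)"
    using arc_add[of Ed q t "k - t"] t by (simp add: Un_assoc)
  have "arc Ed q t \<inter> Q = {}" using Q(1) arc_subset_range[of Ed q t] by blast
  moreover have "arc Ed q t \<inter> arc Ed (q + int t) (k - t) = {}"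
    using arc_disjoint[of t "k - t" q] t k by simp
  ultimately show "arc Ed q t \<inter> (arc Ed (q + int t) (k - t) \<union> Q) = {}" by blast
  show "verts ends (arc Ed q t) \<inter> verts ends (arc Ed (q + int t) (k - t) \<union> Q) \<subseteq> {V q, V (q + int t)}"
  proof
    fix x assume x: "x \<in> verts ends (arc Ed q t) \<inter> verts ends (arc Ed (q + int t) (k - t) \<union> Q)"
    then have "x \<in> (\<lambda>m. V (q + int m)) ` {..t}" using verts_arc_subset_atMost[of q t] by blast
    then obtain a where a: "a \<le> t" "x = V (q + int a)" by blast
    have "x \<in> verts ends (arc Ed (q + int t) (k - t)) \<or> x \<in> verts ends Q" using x by (simp add: verts_Un)
    then show "x \<in> {V q, V (q + int t)}"
    proof
      assume "x \<in> verts ends (arc Ed (q + int t) (k - t))"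
      then have "x \<in> (\<lambda>m. V (q + int m)) ` {t..t + (k - t)}" using verts_arc_subset[of q t "k - t"] by blast
      then obtain b where b: "t \<le> b" "b \<le> k" "x = V (q + int b)" using t by auto
      have "V (q + int a) = V (q + int b)" using a(2) b(3) by (rule subst)
      then have "a = b" using a(1) b(2) t k by (simp add: V_nat_eq_iff)
      then have "a = t" using a(1) b(1) by linarith
      then show ?thesis using a(2) by blast
    next
      assume "x \<in> verts ends Q"
      moreover have "x \<in> verts ends (range Ed)" using x verts_mono[OF arc_subset_range[of Ed q t], of ends] by blast
      ultimately have "x \<in> {V q, V (q + int k)}" using Q(2) by blast
      moreover have "x \<noteq> V (q + int k)" using a t k by (simp add: V_nat_eq_iff)
      ultimately show ?thesis by simp
    qed
  qed
qed

text \<open>The prefix \<open>pvs ! 0, \<dots>, pvs ! i\<close> of the path is closed under the path edges outside the ear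
  \<open>pes ! i, \<dots>, pes ! (j - 1)\<close>, so no walk along those edges joins \<open>pvs ! i\<close> to \<open>pvs ! j\<close>.\<close>

lemma arc_complement_not_in_path:
  assumes W: "uwalk ends pvs pes" and D: "distinct pvs" and ij: "i < j" "j \<le> length pes"
    and k: "k \<le> n" and ends: "{V q, V (q + int k)} = {pvs ! i, pvs ! j}"
    and Q: "(!) pes ` {i..<j} \<inter> range Ed = {}"
  shows "\<not> arc Ed (q + int k) (n - k) \<subseteq> set pes"
proof
  assume R: "arc Ed (q + int k) (n - k) \<subseteq> set pes"
  have "u \<in> (!) pvs ` {..i} \<longleftrightarrow> w \<in> (!) pvs ` {..i}"
    if e: "e \<in> arc Ed (q + int k) (n - k)" "ustep ends u e w" for u e w
  proof -
    have "e \<in> set pes" using e(1) R by blast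
    then obtain m where m: "m < length pes" "e = pes ! m" by (metis in_set_conv_nth)
    moreover have "\<not> (i \<le> m \<and> m < j)"
    proof
      assume "i \<le> m \<and> m < j"
      then have "e \<in> (!) pes ` {i..<j}" using m(2) by auto
      then show False using e(1) Q arc_subset_range[of Ed "q + int k" "n - k"] by blast
    qed
    ultimately show ?thesis using uwalk_prefix_closed[OF W D ij] e(2) by blast
  qed
  from arc_preserves[OF subset_refl this]
  have "V (q + int k) \<in> (!) pvs ` {..i} \<longleftrightarrow> V (q + int k + int (n - k)) \<in> (!) pvs ` {..i}" .
  moreover have "q + int k + int (n - k) = q + int n" using k by simp
  ultimately have iff: "V (q + int k) \<in> (!) pvs ` {..i} \<longleftrightarrow> V q \<in> (!) pvs ` {..i}"
    using V_period[of q] by simp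
  have "pvs ! j \<notin> (!) pvs ` {..i}"
    using distinct_nth_in_image_iff[OF D, of j "{..i}"] uwalkD(1)[OF W] ij by fastforce
  from ends consider "V q = pvs ! i" "V (q + int k) = pvs ! j" | "V q = pvs ! j" "V (q + int k) = pvs ! i"
    by (metis doubleton_eq_iff)
  then show False using iff \<open>pvs ! j \<notin> _\<close> by cases simp_all
qed

lemma ear_card_less:
  assumes W: "uwalk ends pvs pes" and D: "distinct pvs" and ij: "i < j" "j \<le> length pes"
    and k: "k \<le> n" and ends: "{V q, V (q + int k)} = {pvs ! i, pvs ! j}"
    and Q: "(!) pes ` {i..<j} \<inter> range Ed = {}"
  shows "card ((arc Ed q k \<union> (!) pes ` {i..<j}) - set pes) < card (range Ed - set pes)"
proof (rule psubset_card_mono)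
  show "finite (range Ed - set pes)" using finite_range by simp
  obtain e where e: "e \<in> arc Ed (q + int k) (n - k)" "e \<notin> set pes"
    using arc_complement_not_in_path[OF W D ij k ends Q] by blast
  then have "e \<in> range Ed - set pes" using arc_subset_range[of Ed "q + int k" "n - k"] by blast
  moreover have "e \<notin> arc Ed q k" using e(1) arc_disjoint[of k "n - k" q] k by auto
  moreover have "arc Ed q k - set pes \<subseteq> range Ed - set pes" using arc_subset_range[of Ed q k] by blast
  moreover have "(arc Ed q k \<union> (!) pes ` {i..<j}) - set pes = arc Ed q k - set pes" using ij by auto
  ultimately show "(arc Ed q k \<union> (!) pes ` {i..<j}) - set pes \<subset> range Ed - set pes" by blast
qed

text \<open>If the arc starts and ends on the same side, the other side meets it only away from the
  ends of the ear; otherwise the arc switches sides exactly once, at \<open>a\<close> or \<open>b\<close>.\<close>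

lemma ear_resplit:
  assumes P: "is_path dir ends C' a b pvs pes" and split: "splits_at ends (range Ed) a b X Y"
    and k: "0 < k" "k < n" and start: "V q \<in> set pvs"
    and Q: "Q \<subseteq> set pes" "Q \<inter> range Ed = {}" "verts ends Q \<inter> verts ends (range Ed) \<subseteq> {V q, V (q + int k)}"
    and first: "Ed q \<in> X"
  obtains a' b' pvs' pes' X' Y' where "is_path dir ends C' a' b' pvs' pes'" "set pes' \<subseteq> set pes"
    "length pes' < length pes \<or> pes' = pes \<and> {a', b'} = {a, b}"
    "splits_at ends (arc Ed q k \<union> Q) a' b' X' Y'" "X' \<subseteq> set pes \<union> X" "Y' \<subseteq> set pes \<union> Y"
proof -
  have XY: "range Ed = X \<union> Y" "X \<inter> Y = {}" "verts ends X \<inter> verts ends Y \<subseteq> {a, b}"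
    using split by (auto simp: splits_at_def)
  have arc_sides: "arc Ed q k \<subseteq> X \<union> Y" using XY(1) arc_subset_range[of Ed q k] by blast
  then consider (same) "Ed (q + int (k - 1)) \<in> X" | (switch) "Ed (q + int (k - 1)) \<in> Y"
    using arc_last[OF k(1), of Ed q] by blast
  then show thesis
  proof cases
    case same
    have "splits_at ends (arc Ed q k \<union> Q) a b (arc Ed q k \<inter> Y) (arc Ed q k \<inter> X \<union> Q)"
      by (rule splits_at_ear_same_side[OF k splits_at_sym[OF split] Q(2,3) first same])
    then show thesis using Q(1) by (intro that[OF P subset_refl _ splits_at_sym]) auto
  next
    case switch
    obtain t where t: "0 < t" "t < k" "V (q + int t) \<in> {a, b}"
      and sides: "arc Ed q t \<subseteq> X" "arc Ed (q + int t) (k - t) \<subseteq> Y"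
      using arc_switches_once[OF k arc_sides XY(2,3) first switch] by blast
    obtain a' b' pvs' pes' where sub: "is_path dir ends C' a' b' pvs' pes'" "{a', b'} = {V q, V (q + int t)}"
      "set pes' \<subseteq> set pes" "length pes' < length pes \<or> pes' = pes \<and> {a', b'} = {a, b}"
    proof (cases "V q \<in> {a, b}")
      case True
      moreover have "V (q + int t) \<noteq> V q" using t k by (simp add: V_nat_eq_base_iff)
      ultimately have "{a, b} = {V q, V (q + int t)}" using t(3) by auto
      then show thesis using that[OF P] by simp
    next
      case False
      obtain a' b' pvs' pes' where "is_path dir ends C' a' b' pvs' pes'" "{a', b'} = {V q, V (q + int t)}"
        "set pes' \<subseteq> set pes" "length pes' < length pes"
        by (rule path_obtain_subpath_to_end[OF P start False t(3)])
      from this(1-3) this(4)[THEN disjI1] show thesis by (rule that)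
    qed
    have "splits_at ends (arc Ed q k \<union> Q) a' b' (arc Ed q t) (arc Ed (q + int t) (k - t) \<union> Q)"
      using splits_at_ear_switch[OF t(1,2) k(2) Q(2,3)] unfolding splits_at_cong[OF sub(2)] .
    with sub sides Q(1) show thesis by (intro that) auto
  qed
qed

end

definition cycle_in_either :: "'e set set \<Rightarrow> 'e set \<Rightarrow> 'e set \<Rightarrow> 'e set \<Rightarrow> bool" where
  "cycle_in_either \<C> P X Y \<longleftrightarrow> (\<exists>D\<in>\<C>. D \<subseteq> P \<union> X \<or> D \<subseteq> P \<union> Y)"

lemma cycle_in_either_sym: "cycle_in_either \<C> P X Y \<Longrightarrow> cycle_in_either \<C> P Y X"
  unfolding cycle_in_either_def by blast

lemma cycle_in_either_mono:
  assumes "cycle_in_either \<C> P' X' Y'" "P' \<subseteq> P" "X' \<subseteq> P \<union> X" "Y' \<subseteq> P \<union> Y"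
  shows "cycle_in_either \<C> P X Y"
proof -
  obtain D where "D \<in> \<C>" "D \<subseteq> P' \<union> X' \<or> D \<subseteq> P' \<union> Y'"
    using assms(1) unfolding cycle_in_either_def by blast
  moreover have "P' \<union> X' \<subseteq> P \<union> X" "P' \<union> Y' \<subseteq> P \<union> Y" using assms(2-4) by blast+
  ultimately show ?thesis unfolding cycle_in_either_def by blast
qed

lemma uncrossable_obtain_ear_cycle:
  assumes cycles: "\<forall>C\<in>\<C>. cycle_edges dir ends E C" and unc: "uncrossable dir ends \<C>"
    and C1: "C1 \<in> \<C>" and C: "C \<in> \<C>" and param: "cycle_param ends n V Ed" "C = range Ed"
    and P: "is_path dir ends C1 a b pvs pes"
    and ab: "a \<in> verts ends C" "b \<in> verts ends C" and out: "\<not> set pes \<subseteq> C"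
  obtains q k Q where "0 < k" "k < n" "V q \<in> set pvs" "Q \<subseteq> set pes" "Q \<inter> C = {}"
    "verts ends Q \<inter> verts ends C \<subseteq> {V q, V (q + int k)}" "arc Ed q k \<union> Q \<in> \<C>"
    "card ((arc Ed q k \<union> Q) - set pes) < card (C - set pes)"
proof -
  interpret cycle_param ends n V Ed by (fact param(1))
  obtain i j where ij: "i < j" "j \<le> length pes"
    and on_C: "(!) pvs ` {i..j} \<inter> verts ends C = {pvs ! i, pvs ! j}"
    and off_C: "(!) pes ` {i..<j} \<inter> C = {}"
    using path_obtain_ear[OF P ab out] by blast
  define Q where "Q = (!) pes ` {i..<j}"
  obtain vsQ esQ where Q_path: "is_path dir ends C1 (pvs ! i) (pvs ! j) vsQ esQ"
    and vsQ: "set vsQ \<inter> verts ends C = {pvs ! i, pvs ! j}" and esQ: "set esQ = Q"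
    using is_path_obtain_segment[OF P less_imp_le[OF ij(1)] ij(2)] on_C unfolding Q_def by metis
  have xy: "pvs ! i \<noteq> pvs ! j" using is_pathD(2,4)[OF P] ij by (simp add: nth_eq_iff_index_eq)
  with unc C C1 Q_path vsQ off_C esQ obtain Pc D where
    Pc: "path_in dir ends C (pvs ! i) (pvs ! j) Pc \<or> path_in dir ends C (pvs ! j) (pvs ! i) Pc"
    and D: "D \<in> \<C>" "mset_set D = mset_set Pc + mset_set Q"
    unfolding uncrossable_def Q_def by metis
  obtain s t vs' es' where Pc_path: "is_path dir ends C s t vs' es'" "{s, t} = {pvs ! i, pvs ! j}" "Pc = set es'"
    using Pc unfolding path_in_def by (metis insert_commute)
  moreover have "s \<noteq> t" using xy Pc_path(2) by (auto simp: doubleton_eq_iff)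
  moreover have "set es' \<subseteq> range Ed" using is_pathD(3)[OF Pc_path(1)] param(2) by simp
  ultimately obtain q k where arc: "0 < k" "k < n" "Pc = arc Ed q k" "{pvs ! i, pvs ! j} = {V q, V (q + int k)}"
    using path_obtain_arc by metis
  have "finite D" using cycles D(1) cycle_edges_finite by blast
  then have "D = Pc \<union> Q" using arg_cong[OF D(2), of set_mset] Pc_path(3) by (simp add: Q_def)
  then have "arc Ed q k \<union> Q \<in> \<C>" using D(1) arc(3) by simp
  moreover have "verts ends Q \<inter> verts ends C \<subseteq> {V q, V (q + int k)}"
    using verts_uwalk_segment[OF is_pathD(1)[OF P] ij(2), of i] on_C arc(4) unfolding Q_def by blast
  moreover have "card ((arc Ed q k \<union> Q) - set pes) < card (C - set pes)"
    using ear_card_less[OF is_pathD(1,2)[OF P] ij _ arc(4)[symmetric]] arc(2) off_C param(2)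
    unfolding Q_def by simp
  moreover have "V q \<in> {pvs ! i, pvs ! j}" using arc(4) by blast
  then have "V q \<in> set pvs" using ij is_pathD(4)[OF P] by auto
  moreover have "Q \<subseteq> set pes" using ij by (auto simp: Q_def)
  ultimately show thesis using that arc(1,2) off_C unfolding Q_def by blast
qed

lemma split_induction_step:
  assumes cycles: "\<forall>C\<in>\<C>. cycle_edges dir ends E C" and unc: "uncrossable dir ends \<C>" and C1: "C1 \<in> \<C>"
    and P: "is_path dir ends C1 a b pvs pes" and C: "C \<in> \<C>" and split: "splits_at ends C a b X Y"
    and IH_shorter: "\<And>a' b' pvs' pes' C' X' Y'. length pes' < length pes \<Longrightarrow>
        is_path dir ends C1 a' b' pvs' pes' \<Longrightarrow> C' \<in> \<C> \<Longrightarrow> splits_at ends C' a' b' X' Y' \<Longrightarrow>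
        cycle_in_either \<C> (set pes') X' Y'"
    and IH_closer: "\<And>C' X' Y'. card (C' - set pes) < card (C - set pes) \<Longrightarrow> C' \<in> \<C> \<Longrightarrow>
        splits_at ends C' a b X' Y' \<Longrightarrow> cycle_in_either \<C> (set pes) X' Y'"
  shows "cycle_in_either \<C> (set pes) X Y"
proof -
  obtain n V Ed where param: "cycle_param ends n V Ed" and C_eq: "C = range Ed"
    using cycles C cycle_edges_obtain_param by metis
  interpret cycle_param ends n V Ed by (fact param)
  have whole_cycle: "cycle_in_either \<C> (set pes) X Y" if "C \<subseteq> set pes \<union> X \<or> C \<subseteq> set pes \<union> Y"
    using that C unfolding cycle_in_either_def by blast
  consider (no_ear) "a = b \<or> a \<notin> verts ends C \<or> b \<notin> verts ends C \<or> set pes \<subseteq> C"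
    | (ear) "a \<in> verts ends C" "b \<in> verts ends C" "\<not> set pes \<subseteq> C" by blast
  then show ?thesis
  proof cases
    case no_ear
    then show ?thesis using split_without_ear[OF P] split whole_cycle unfolding C_eq by blast
  next
    case ear
    then obtain q k Q where k: "0 < k" "k < n" and start: "V q \<in> set pvs" and Q_P: "Q \<subseteq> set pes"
      and Q: "Q \<inter> C = {}" "verts ends Q \<inter> verts ends C \<subseteq> {V q, V (q + int k)}"
      and D: "arc Ed q k \<union> Q \<in> \<C>" and card: "card ((arc Ed q k \<union> Q) - set pes) < card (C - set pes)"
      by (rule uncrossable_obtain_ear_cycle[OF cycles unc C1 C param C_eq P])
    have resplit: "cycle_in_either \<C> (set pes) X' Y'"
      if split': "splits_at ends C a b X' Y'" and first: "Ed q \<in> X'" for X' Y'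
    proof -
      obtain a' b' pvs' pes' X'' Y'' where sub: "is_path dir ends C1 a' b' pvs' pes'" "set pes' \<subseteq> set pes"
        "length pes' < length pes \<or> pes' = pes \<and> {a', b'} = {a, b}"
        "splits_at ends (arc Ed q k \<union> Q) a' b' X'' Y''"
        "X'' \<subseteq> set pes \<union> X'" "Y'' \<subseteq> set pes \<union> Y'"
        by (rule ear_resplit[OF P split'[unfolded C_eq] k start Q_P Q[unfolded C_eq] first])
      have "cycle_in_either \<C> (set pes') X'' Y''"
      proof (cases "length pes' < length pes")
        case True
        show ?thesis by (rule IH_shorter[OF True sub(1) D sub(4)])
      next
        case False
        then show ?thesis using IH_closer[OF card D] sub(3,4) splits_at_cong by metis
      qed
      then show ?thesis using sub(2,5,6) by (rule cycle_in_either_mono)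
    qed
    have "Ed q \<in> X \<or> Ed q \<in> Y" using split C_eq by (auto simp: splits_at_def)
    then show ?thesis using resplit[OF split] resplit[OF splits_at_sym[OF split]] cycle_in_either_sym by blast
  qed
qed

lemma uncrossable_splits_cycle_in_either:
  assumes cycles: "\<forall>C\<in>\<C>. cycle_edges dir ends E C" and unc: "uncrossable dir ends \<C>" and C1: "C1 \<in> \<C>"
  shows "is_path dir ends C1 a b pvs pes \<Longrightarrow> C \<in> \<C> \<Longrightarrow> splits_at ends C a b X Y \<Longrightarrow>
    cycle_in_either \<C> (set pes) X Y"
proof (induction "length pes" arbitrary: a b pvs pes C X Y rule: less_induct)
  case less
  note IH_shorter = less.hyps
  from less.prems show ?case
  proof (induction "card (C - set pes)" arbitrary: C X Y rule: less_induct)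
    case less
    show ?case
      by (rule split_induction_step[OF cycles unc C1 less.prems]) (use IH_shorter less.hyps less.prems in blast)+
  qed
qed

lemma mset_set_subset_Un:
  assumes "finite A" "finite B" "D \<subseteq> A \<union> B"
  shows "mset_set D \<subseteq># mset_set A + mset_set B"
proof -
  have "finite D" using assms finite_subset by blast
  then show ?thesis using assms by (auto simp: subseteq_mset_def count_mset_set')
qed

theorem lemma4p3:
  fixes dir :: bool and ends :: "'e \<Rightarrow> 'v \<times> 'v" and E :: "'e set" and \<C> :: "'e set set"
  assumes cycles: "\<forall>C\<in>\<C>. cycle_edges dir ends E C"
    and unc: "uncrossable dir ends \<C>"
    and C1: "C1 \<in> \<C>" and C2: "C2 \<in> \<C>"
    and P1: "path_in dir ends C1 v w P1"
    and P2: "path_in dir ends C2 v w P2"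
  shows "\<exists>D\<in>\<C>. mset_set D \<subseteq># mset_set P1 + mset_set P2 \<or>
                 mset_set D \<subseteq># mset_set P1 + mset_set (C2 - P2)"
proof -
  obtain pvs pes where P1': "is_path dir ends C1 v w pvs pes" "P1 = set pes"
    using P1 unfolding path_in_def by blast
  obtain vs es where P2': "is_path dir ends C2 v w vs es" "P2 = set es"
    using P2 unfolding path_in_def by blast
  obtain n V Ed where param: "cycle_param ends n V Ed" and C2_eq: "C2 = range Ed"
    using cycles C2 cycle_edges_obtain_param by metis
  have "splits_at ends C2 v w P2 (C2 - P2)"
    using cycle_param.path_splits_cycle[OF param P2'(1)] is_pathD(3)[OF P2'(1)] P2'(2) C2_eq by simp
  then have "cycle_in_either \<C> P1 P2 (C2 - P2)"
    using uncrossable_splits_cycle_in_either[OF cycles unc C1 P1'(1) C2] P1'(2) by simp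
  moreover have "finite C2" using cycles C2 cycle_edges_finite by blast
  ultimately show ?thesis
    using mset_set_subset_Un[of P1 P2] mset_set_subset_Un[of P1 "C2 - P2"] P1'(2) P2'(2)
    unfolding cycle_in_either_def by auto
qed

end
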